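(* Let $n\ge2$ and let $M\subset\mathbb{C}^n\times\mathbb{R}$ be given by $$s=\sum_{j=1}^a|z_j|^2-\sum_{j=a+1}^{a+b}|z_j|^2+B(z,z)+\overline{B(z,z)}=Q(z,\bar z),$$ where $a\ge2$, $a+b\le n$, $B$ is a complex bilinear form, and the real quadratic form $Q$ is nondegenerate. Write $A(z,\bar z)=\sum_{j=1}^a|z_j|^2-\sum_{j=a+1}^{a+b}|z_j|^2$. Suppose $f(z,\bar z)$ is a polynomial such that, considered as a function on $M$ parametrized by $z$, $f$ is a CR function on $M_{CR}$. Then there exists a polynomial $F(z,s)$ such that $$f(z,\bar z)=F\big(z,A(z,\bar z)+B(z,z)+\overline{B(z,z)}\big).$$ Furthermore, if $f$ is homogeneous of degree $d$, then $F$ is weighted homogeneous of degree $d$, i.e. $F(z,s)=\sum_{j+2k=d}P_j(z)s^k$ with each $P_j$ a homogeneous polynomial of degree $j$.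
   Context: $M_{CR}$ is the set of points $p\in M$ where $\dim_{\mathbb{C}}\big((\mathbb{C}\otimes T_pM)\cap\operatorname{span}\{\partial/\partial\bar z_1,\dots,\partial/\partial\bar z_n\}\big)=n-1$; $f$ is CR on $M_{CR}$ if it is annihilated by all vector fields on $M_{CR}$ with values in this space. *)

theory Defs
  imports "HOL-Analysis.Analysis"
begin

text \<open>Points of C^n are vectors z :: complex^'n, the index type 'n having CARD('n) = n elements.\<close>

definition vconj :: "complex^'n \<Rightarrow> complex^'n" where
  "vconj z = (\<chi> j. cnj (z $ j))"

definition mono :: "('n::finite \<Rightarrow> nat) \<Rightarrow> complex^'n \<Rightarrow> complex" where
  "mono \<alpha> z = (\<Prod>j\<in>UNIV. (z $ j) ^ (\<alpha> j))"

definition mdeg :: "('n::finite \<Rightarrow> nat) \<Rightarrow> nat" where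
  "mdeg \<alpha> = (\<Sum>j\<in>UNIV. \<alpha> j)"

definition poly_zzbar :: "(complex^'n::finite \<Rightarrow> complex) \<Rightarrow> bool" where
  "poly_zzbar f \<longleftrightarrow> (\<exists>S c. finite S \<and>
     (\<forall>z. f z = (\<Sum>(\<alpha>,\<beta>)\<in>S. c (\<alpha>,\<beta>) * mono \<alpha> z * mono \<beta> (vconj z))))"

definition homog_poly_zzbar :: "(complex^'n::finite \<Rightarrow> complex) \<Rightarrow> nat \<Rightarrow> bool" where
  "homog_poly_zzbar f d \<longleftrightarrow> (\<exists>S c. finite S \<and> (\<forall>(\<alpha>,\<beta>)\<in>S. mdeg \<alpha> + mdeg \<beta> = d) \<and>
     (\<forall>z. f z = (\<Sum>(\<alpha>,\<beta>)\<in>S. c (\<alpha>,\<beta>) * mono \<alpha> z * mono \<beta> (vconj z))))"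

definition poly_zs :: "(complex^'n::finite \<Rightarrow> complex \<Rightarrow> complex) \<Rightarrow> bool" where
  "poly_zs F \<longleftrightarrow> (\<exists>S c. finite S \<and>
     (\<forall>z s. F z s = (\<Sum>(\<alpha>,k)\<in>S. c (\<alpha>,k) * mono \<alpha> z * s ^ k)))"

definition whomog_poly_zs :: "(complex^'n::finite \<Rightarrow> complex \<Rightarrow> complex) \<Rightarrow> nat \<Rightarrow> bool" where
  "whomog_poly_zs F d \<longleftrightarrow> (\<exists>S c. finite S \<and> (\<forall>(\<alpha>,k)\<in>S. mdeg \<alpha> + 2 * k = d) \<and>
     (\<forall>z s. F z s = (\<Sum>(\<alpha>,k)\<in>S. c (\<alpha>,k) * mono \<alpha> z * s ^ k)))"

definition wirt_dbar :: "(complex^'n::finite \<Rightarrow> complex) \<Rightarrow> 'n \<Rightarrow> complex^'n \<Rightarrow> complex" where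
  "wirt_dbar f j z = (let D = frechet_derivative f (at z)
                      in (D (axis j 1) + \<i> * D (axis j \<i>)) / 2)"

text \<open>A(z, conj z) with positive indices Pos (a of them) and negative indices Neg (b of them).\<close>
definition herm_form :: "'n set \<Rightarrow> 'n set \<Rightarrow> complex^'n::finite \<Rightarrow> real" where
  "herm_form Pos Neg z = (\<Sum>j\<in>Pos. (cmod (z $ j))^2) - (\<Sum>j\<in>Neg. (cmod (z $ j))^2)"

definition bilin :: "complex^'n^'n \<Rightarrow> complex^'n::finite \<Rightarrow> complex" where
  "bilin b z = (\<Sum>j\<in>UNIV. \<Sum>k\<in>UNIV. b $ j $ k * z $ j * z $ k)"

definition Qform :: "'n set \<Rightarrow> 'n set \<Rightarrow> complex^'n^'n \<Rightarrow> complex^'n::finite \<Rightarrow> real" where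
  "Qform Pos Neg b z = Re (complex_of_real (herm_form Pos Neg z) + bilin b z + cnj (bilin b z))"

definition nondegenerate_qf :: "(complex^'n::finite \<Rightarrow> real) \<Rightarrow> bool" where
  "nondegenerate_qf Q \<longleftrightarrow>
     (\<forall>w. (\<forall>v. (Q (v + w) - Q v - Q w) / 2 = 0) \<longrightarrow> w = 0)"

text \<open>(0,1)-vectors tangent to M = {(z,s). s = Q z} at the point over z, in the z-parametrisation:
  sum a_j (d/d conj z_j + dQ/d conj z_j d/ds) with sum a_j dQ/d conj z_j = 0.\<close>
definition CR_space :: "(complex^'n::finite \<Rightarrow> real) \<Rightarrow> complex^'n \<Rightarrow> (complex^'n) set" where
  "CR_space Q z = {a. (\<Sum>j\<in>UNIV. a $ j * wirt_dbar (\<lambda>u. complex_of_real (Q u)) j z) = 0}"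

text \<open>M_CR: complex dimension of the CR space is n-1 (real dimension 2(n-1)).\<close>
definition M_CR :: "(complex^'n::finite \<Rightarrow> real) \<Rightarrow> (complex^'n) set" where
  "M_CR Q = {z. dim (CR_space Q z) = 2 * (CARD('n) - 1)}"

definition is_CR_on_MCR :: "(complex^'n::finite \<Rightarrow> real) \<Rightarrow> (complex^'n \<Rightarrow> complex) \<Rightarrow> bool" where
  "is_CR_on_MCR Q f \<longleftrightarrow>
     (\<forall>z\<in>M_CR Q. \<forall>a\<in>CR_space Q z. (\<Sum>j\<in>UNIV. a $ j * wirt_dbar f j z) = 0)"

end

theory Submission
  imports Defs "HOL-Complex_Analysis.Complex_Analysis"
begin

text \<open>Write \<open>f(z) = P(z, cnj z)\<close> and \<open>Q(z) = Q\<^sub>c(z, cnj z)\<close> with polynomials \<open>P\<close>, \<open>Q\<^sub>c\<close>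
  in independent variables \<open>(z, w)\<close>. Where \<open>\<partial>Q/\<partial>(cnj z) \<noteq> 0\<close> the CR space consists of the
  vectors annihilated by \<open>\<partial>Q/\<partial>(cnj z)\<close>, so the CR equations say that the \<open>w\<close>-gradients of \<open>P\<close>
  and \<open>Q\<^sub>c\<close> are parallel on \<open>w = cnj z\<close>; this is a polynomial identity, hence it holds for all
  \<open>(z, w)\<close>. Since \<open>\<partial>Q\<^sub>c/\<partial>w\<^sub>p = z\<^sub>p - L\<^sub>p(w)\<close> for two positive directions \<open>p\<^sub>1 \<noteq> p\<^sub>2\<close>,
  divisibility gives \<open>\<nabla>\<^sub>wP = h \<nabla>\<^sub>wQ\<^sub>c\<close> with a polynomial \<open>h\<close> of lower degree whose gradient is
  again parallel. By induction \<open>h = H(z, Q\<^sub>c)\<close>, and integrating \<open>H\<close> in \<open>s\<close> gives \<open>P = F(z, Q\<^sub>c)\<close>.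
  For homogeneous \<open>f\<close> of degree \<open>d\<close>, comparing coefficients of \<open>t\<close> in \<open>f(t z) = t\<^sup>d f(z)\<close> shows
  that the weight-\<open>d\<close> component of \<open>F\<close> alone represents \<open>f\<close>.\<close>

lemma vconj_nth [simp]: "vconj z $ k = cnj (z $ k)"
  by (simp add: vconj_def)

lemma vconj_smult_of_real: "vconj (of_real t *s z) = of_real t *s vconj z"
  by (simp add: vec_eq_iff)

definition vec_upd :: "complex^'n \<Rightarrow> 'n \<Rightarrow> complex \<Rightarrow> complex^'n" where
  "vec_upd z p a = (\<chi> k. if k = p then a else z $ k)"

lemma vec_upd_nth [simp]: "vec_upd z p a $ k = (if k = p then a else z $ k)"
  by (simp add: vec_upd_def)

lemma vec_upd_same: "vec_upd z p (z $ p) = z"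
  by (simp add: vec_eq_iff)

lemma sum_axis_mult: "(\<Sum>k\<in>UNIV. axis j c $ k * X k) = c * (X j :: complex)"
proof -
  have "axis j c $ k * X k = (if j = k then c * X j else 0)" for k
    by (simp add: axis_def)
  then show ?thesis by simp
qed

lemma sum_mult_axis_1: "(\<Sum>k\<in>UNIV. u $ k * axis k (1::complex) $ j) = u $ j"
  by (simp add: axis_def if_distrib cong: if_cong)

section \<open>Polynomials in two vector variables\<close>

inductive bipoly :: "(complex^'n::finite \<Rightarrow> complex^'n \<Rightarrow> complex) \<Rightarrow> nat \<Rightarrow> bool" where
  bipoly_const: "bipoly (\<lambda>z w. c) 0"
| bipoly_fst: "bipoly (\<lambda>z w. z $ j) 1"
| bipoly_snd: "bipoly (\<lambda>z w. w $ j) 1"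
| bipoly_add: "bipoly P d \<Longrightarrow> bipoly Q d \<Longrightarrow> bipoly (\<lambda>z w. P z w + Q z w) d"
| bipoly_mult: "bipoly P d \<Longrightarrow> bipoly Q e \<Longrightarrow> bipoly (\<lambda>z w. P z w * Q z w) (d + e)"
| bipoly_mono: "bipoly P d \<Longrightarrow> d \<le> e \<Longrightarrow> bipoly P e"

lemma bipoly_cong: "bipoly P d \<Longrightarrow> (\<And>z w. P z w = Q z w) \<Longrightarrow> bipoly Q d"
proof -
  assume "bipoly P d" "\<And>z w. P z w = Q z w"
  then have "P = Q" by (intro ext)
  with \<open>bipoly P d\<close> show ?thesis by simp
qed

lemma bipoly_const': "bipoly (\<lambda>z w. c) d"
  by (rule bipoly_mono[OF bipoly_const]) simp

lemma bipoly_cmult: "bipoly P d \<Longrightarrow> bipoly (\<lambda>z w. c * P z w) d"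
  using bipoly_mult[OF bipoly_const, of P d c] by simp

lemma bipoly_neg: "bipoly P d \<Longrightarrow> bipoly (\<lambda>z w. - P z w) d"
  by (rule bipoly_cong[OF bipoly_cmult[of P d "-1"]]) auto

lemma bipoly_diff: "bipoly P d \<Longrightarrow> bipoly Q d \<Longrightarrow> bipoly (\<lambda>z w. P z w - Q z w) d"
  by (rule bipoly_cong[OF bipoly_add[OF _ bipoly_neg]]) auto

lemma bipoly_sum:
  "finite S \<Longrightarrow> (\<And>x. x \<in> S \<Longrightarrow> bipoly (P x) d) \<Longrightarrow> bipoly (\<lambda>z w. \<Sum>x\<in>S. P x z w) d"
proof (induction S rule: finite_induct)
  case empty
  then show ?case using bipoly_const' by simp
next
  case (insert x F)
  then show ?case using bipoly_add[of "P x" d "\<lambda>z w. \<Sum>x\<in>F. P x z w"] by simp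
qed

lemma bipoly_degree_0: "bipoly P 0 \<Longrightarrow> \<exists>c. P = (\<lambda>z w. c)"
proof (induction P "0::nat" rule: bipoly.induct)
  case (bipoly_add P Q)
  then show ?case by auto
next
  case (bipoly_mult P d Q e)
  then show ?case by auto
qed auto

definition is_bipoly :: "(complex^'n::finite \<Rightarrow> complex^'n \<Rightarrow> complex) \<Rightarrow> bool" where
  "is_bipoly P \<longleftrightarrow> (\<exists>d. bipoly P d)"

lemma is_bipoly_const [simp]: "is_bipoly (\<lambda>z w. c)"
  and is_bipoly_fst [simp]: "is_bipoly (\<lambda>z w. z $ j)"
  and is_bipoly_snd [simp]: "is_bipoly (\<lambda>z w. w $ j)"
  unfolding is_bipoly_def by (blast intro: bipoly.intros)+

lemma is_bipoly_add [simp]: "is_bipoly P \<Longrightarrow> is_bipoly Q \<Longrightarrow> is_bipoly (\<lambda>z w. P z w + Q z w)"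
proof -
  assume "is_bipoly P" "is_bipoly Q"
  then obtain d e where "bipoly P d" "bipoly Q e" unfolding is_bipoly_def by blast
  then have "bipoly P (max d e)" "bipoly Q (max d e)" by (auto elim: bipoly_mono)
  then show ?thesis unfolding is_bipoly_def using bipoly_add by blast
qed

lemma is_bipoly_mult [simp]: "is_bipoly P \<Longrightarrow> is_bipoly Q \<Longrightarrow> is_bipoly (\<lambda>z w. P z w * Q z w)"
  unfolding is_bipoly_def using bipoly_mult by blast

lemma is_bipoly_diff [simp]: "is_bipoly P \<Longrightarrow> is_bipoly Q \<Longrightarrow> is_bipoly (\<lambda>z w. P z w - Q z w)"
  unfolding is_bipoly_def by (metis bipoly_diff bipoly_mono max.cobounded1 max.cobounded2)

lemma is_bipoly_sum [simp]:
  "finite S \<Longrightarrow> (\<And>x. x \<in> S \<Longrightarrow> is_bipoly (P x)) \<Longrightarrow> is_bipoly (\<lambda>z w. \<Sum>x\<in>S. P x z w)"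
  by (induction S rule: finite_induct) auto

lemma is_bipoly_prod:
  "finite S \<Longrightarrow> (\<And>x. x \<in> S \<Longrightarrow> is_bipoly (P x)) \<Longrightarrow> is_bipoly (\<lambda>z w. \<Prod>x\<in>S. P x z w)"
  by (induction S rule: finite_induct) auto

lemma is_bipoly_power: "is_bipoly P \<Longrightarrow> is_bipoly (\<lambda>z w. P z w ^ n)"
  by (induction n) auto

lemma is_bipoly_mono_fst: "is_bipoly (\<lambda>z w. mono \<alpha> z)"
  and is_bipoly_mono_snd: "is_bipoly (\<lambda>z w. mono \<alpha> w)"
  unfolding mono_def by (auto intro!: is_bipoly_prod is_bipoly_power)

lemma poly_zzbar_bipoly:
  fixes f :: "complex^'n::finite \<Rightarrow> complex"
  assumes "poly_zzbar f"
  obtains P d where "bipoly P d" "\<And>z. f z = P z (vconj z)"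
proof -
  obtain S c where S: "finite S" "\<And>z. f z = (\<Sum>(\<alpha>,\<beta>)\<in>S. c (\<alpha>,\<beta>) * mono \<alpha> z * mono \<beta> (vconj z))"
    using assms unfolding poly_zzbar_def by blast
  define P where "P z w = (\<Sum>x\<in>S. c x * mono (fst x) z * mono (snd x) w)" for z w :: "complex^'n"
  have "is_bipoly P"
    unfolding P_def[abs_def] using S(1) by (simp add: is_bipoly_mono_fst is_bipoly_mono_snd)
  moreover have "f z = P z (vconj z)" for z
    unfolding S(2) P_def by (simp add: case_prod_unfold)
  ultimately show ?thesis using that unfolding is_bipoly_def by blast
qed

section \<open>Complex derivatives along lines\<close>

lemma bipoly_line_holomorphic:
  assumes "bipoly P d"
  shows "(\<lambda>t. P (z + t *s u) (w + t *s v)) field_differentiable (at t0)"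
  using assms
proof (induction arbitrary: z w rule: bipoly.induct)
  case (bipoly_add P d Q)
  then show ?case by (intro field_differentiable_add) auto
next
  case (bipoly_mult P d Q e)
  then show ?case by (intro field_differentiable_mult) auto
qed (auto intro!: field_differentiable_add field_differentiable_mult
       field_differentiable_const field_differentiable_ident)

lemma bipoly_line_continuous:
  "bipoly P d \<Longrightarrow> isCont (\<lambda>t. P (z + t *s u) (w + t *s v)) a"
  using bipoly_line_holomorphic field_differentiable_imp_continuous_at by blast

definition dderiv ::
  "(complex^'n::finite \<Rightarrow> complex^'n \<Rightarrow> complex) \<Rightarrow> complex^'n \<Rightarrow> complex^'n \<Rightarrow> complex^'n \<Rightarrow> complex^'n \<Rightarrow> complex"
  where "dderiv P z w u v = deriv (\<lambda>t. P (z + t *s u) (w + t *s v)) 0"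

abbreviation dderiv_snd ::
  "(complex^'n::finite \<Rightarrow> complex^'n \<Rightarrow> complex) \<Rightarrow> 'n \<Rightarrow> complex^'n \<Rightarrow> complex^'n \<Rightarrow> complex"
  where "dderiv_snd P j z w \<equiv> dderiv P z w 0 (axis j 1)"

lemma bipoly_has_dderiv:
  assumes "bipoly P d"
  shows "((\<lambda>t. P (z + t *s u) (w + t *s v)) has_field_derivative dderiv P z w u v) (at 0)"
  unfolding dderiv_def using bipoly_line_holomorphic[OF assms] DERIV_deriv_iff_field_differentiable by blast

lemma bipoly_has_dderiv_at:
  assumes "bipoly P d"
  shows "((\<lambda>t. P (z + t *s u) (w + t *s v)) has_field_derivative
            dderiv P (z + t0 *s u) (w + t0 *s v) u v) (at t0)"
proof -
  have "((\<lambda>s. P ((z + t0 *s u) + s *s u) ((w + t0 *s v) + s *s v)) has_field_derivative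
          dderiv P (z + t0 *s u) (w + t0 *s v) u v) (at 0)"
    by (rule bipoly_has_dderiv[OF assms])
  then have "((\<lambda>s. P (z + (s + t0) *s u) (w + (s + t0) *s v)) has_field_derivative
          dderiv P (z + t0 *s u) (w + t0 *s v) u v) (at 0)"
    by (simp add: vector_sadd_rdistrib add_ac)
  then show ?thesis using DERIV_shift[where x=0 and z=t0] by simp
qed

lemma dderiv_const [simp]: "dderiv (\<lambda>z w. c) z w u v = 0"
  by (simp add: dderiv_def)

lemma dderiv_coord_fst [simp]: "dderiv (\<lambda>z w. z $ j) z w u v = u $ j"
  unfolding dderiv_def by (rule DERIV_imp_deriv) (auto intro!: derivative_eq_intros)

lemma dderiv_coord_snd [simp]: "dderiv (\<lambda>z w. w $ j) z w u v = v $ j"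
  unfolding dderiv_def by (rule DERIV_imp_deriv) (auto intro!: derivative_eq_intros)

lemma dderiv_add:
  assumes "bipoly P d" "bipoly Q e"
  shows "dderiv (\<lambda>z w. P z w + Q z w) z w u v = dderiv P z w u v + dderiv Q z w u v"
  unfolding dderiv_def[of "\<lambda>z w. P z w + Q z w"]
  by (rule DERIV_imp_deriv, rule DERIV_add[OF bipoly_has_dderiv[OF assms(1)] bipoly_has_dderiv[OF assms(2)]])

lemma dderiv_mult:
  assumes "bipoly P d" "bipoly Q e"
  shows "dderiv (\<lambda>z w. P z w * Q z w) z w u v = dderiv P z w u v * Q z w + P z w * dderiv Q z w u v"
proof -
  have "((\<lambda>t. P (z + t *s u) (w + t *s v) * Q (z + t *s u) (w + t *s v))
          has_field_derivative dderiv P z w u v * Q z w + P z w * dderiv Q z w u v) (at 0)"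
    using DERIV_mult'[OF bipoly_has_dderiv[OF assms(1), of z u w v] bipoly_has_dderiv[OF assms(2), of z u w v]]
    by (simp add: add.commute)
  then show ?thesis unfolding dderiv_def[of "\<lambda>z w. P z w * Q z w"] by (rule DERIV_imp_deriv)
qed

lemma is_bipoly_dderiv_add:
  "is_bipoly P \<Longrightarrow> is_bipoly Q \<Longrightarrow>
     dderiv (\<lambda>z w. P z w + Q z w) z w u v = dderiv P z w u v + dderiv Q z w u v"
  unfolding is_bipoly_def using dderiv_add by blast

lemma is_bipoly_dderiv_mult:
  "is_bipoly P \<Longrightarrow> is_bipoly Q \<Longrightarrow>
     dderiv (\<lambda>z w. P z w * Q z w) z w u v = dderiv P z w u v * Q z w + P z w * dderiv Q z w u v"
  unfolding is_bipoly_def using dderiv_mult by blast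

lemma is_bipoly_dderiv_sum:
  "finite S \<Longrightarrow> (\<And>x. x \<in> S \<Longrightarrow> is_bipoly (P x)) \<Longrightarrow>
     dderiv (\<lambda>z w. \<Sum>x\<in>S. P x z w) z w u v = (\<Sum>x\<in>S. dderiv (P x) z w u v)"
proof (induction S rule: finite_induct)
  case (insert x S)
  then have "dderiv (\<lambda>z w. P x z w + (\<Sum>x\<in>S. P x z w)) z w u v
      = dderiv (P x) z w u v + dderiv (\<lambda>z w. \<Sum>x\<in>S. P x z w) z w u v"
    by (intro is_bipoly_dderiv_add) auto
  with insert show ?case by simp
qed simp

lemma bipoly_dderiv: "bipoly P d \<Longrightarrow> bipoly (\<lambda>z w. dderiv P z w u v) (d - 1)"
proof (induction rule: bipoly.induct)
  case (bipoly_const c)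
  then show ?case using bipoly.bipoly_const[of 0] by simp
next
  case (bipoly_fst j)
  then show ?case using bipoly.bipoly_const[of "u $ j"] by simp
next
  case (bipoly_snd j)
  then show ?case using bipoly.bipoly_const[of "v $ j"] by simp
next
  case (bipoly_add P d Q)
  then show ?case by (intro bipoly_cong[OF bipoly.bipoly_add[OF bipoly_add.IH]]) (simp add: dderiv_add)
next
  case (bipoly_mult P d Q e)
  have eq: "dderiv (\<lambda>z w. P z w * Q z w) z w u v = dderiv P z w u v * Q z w + P z w * dderiv Q z w u v" for z w
    by (rule dderiv_mult[OF bipoly_mult.hyps])
  consider "d = 0" | "e = 0" | "d > 0" "e > 0" by auto
  then show ?case
  proof cases
    case 1
    then obtain c where P: "P = (\<lambda>z w. c)" using bipoly_degree_0 bipoly_mult.hyps by blast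
    have "bipoly (\<lambda>z w. c * dderiv Q z w u v) (d + e - 1)"
      using bipoly_cmult[OF bipoly_mult.IH(2), of c] 1 by simp
    then show ?thesis by (rule bipoly_cong) (simp only: eq, simp add: P)
  next
    case 2
    then obtain c where Q: "Q = (\<lambda>z w. c)" using bipoly_degree_0 bipoly_mult.hyps by blast
    have "bipoly (\<lambda>z w. c * dderiv P z w u v) (d + e - 1)"
      using bipoly_cmult[OF bipoly_mult.IH(1), of c] 2 by simp
    then show ?thesis by (rule bipoly_cong) (simp only: eq, simp add: Q mult.commute)
  next
    case 3
    have "bipoly (\<lambda>z w. dderiv P z w u v * Q z w) (d + e - 1)"
      using bipoly.bipoly_mult[OF bipoly_mult.IH(1) bipoly_mult.hyps(2)] 3 by (auto elim: bipoly_mono)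
    moreover have "bipoly (\<lambda>z w. P z w * dderiv Q z w u v) (d + e - 1)"
      using bipoly.bipoly_mult[OF bipoly_mult.hyps(1) bipoly_mult.IH(2)] 3 by (auto elim: bipoly_mono)
    ultimately show ?thesis by (rule bipoly_cong[OF bipoly.bipoly_add]) (simp add: eq)
  qed
next
  case (bipoly_mono P d e)
  then show ?case by (auto elim: bipoly.bipoly_mono)
qed

lemma dderiv_commute:
  "bipoly P d \<Longrightarrow>
     dderiv (\<lambda>z w. dderiv P z w u v) z w u' v' = dderiv (\<lambda>z w. dderiv P z w u' v') z w u v"
proof (induction arbitrary: z w rule: bipoly.induct)
  case (bipoly_add P d Q)
  have split: "(\<lambda>z w. dderiv (\<lambda>z w. P z w + Q z w) z w a b) = (\<lambda>z w. dderiv P z w a b + dderiv Q z w a b)" for a b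
    using dderiv_add[OF bipoly_add.hyps] by (intro ext) simp
  show ?case unfolding split using bipoly_add.IH
    by (simp add: dderiv_add[OF bipoly_dderiv[OF bipoly_add.hyps(1)] bipoly_dderiv[OF bipoly_add.hyps(2)]])
next
  case (bipoly_mult P d Q e)
  have split: "(\<lambda>z w. dderiv (\<lambda>z w. P z w * Q z w) z w a b)
      = (\<lambda>z w. dderiv P z w a b * Q z w + P z w * dderiv Q z w a b)" for a b
    using dderiv_mult[OF bipoly_mult.hyps] by (intro ext) simp
  have second: "dderiv (\<lambda>z w. dderiv P z w a b * Q z w + P z w * dderiv Q z w a b) z w a' b' =
     dderiv (\<lambda>z w. dderiv P z w a b) z w a' b' * Q z w + dderiv P z w a b * dderiv Q z w a' b' +
     (dderiv P z w a' b' * dderiv Q z w a b + P z w * dderiv (\<lambda>z w. dderiv Q z w a b) z w a' b')" for a b a' b'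
    by (simp add: dderiv_add[OF bipoly.bipoly_mult[OF bipoly_dderiv[OF bipoly_mult.hyps(1)] bipoly_mult.hyps(2)]
                  bipoly.bipoly_mult[OF bipoly_mult.hyps(1) bipoly_dderiv[OF bipoly_mult.hyps(2)]]]
                  dderiv_mult[OF bipoly_dderiv[OF bipoly_mult.hyps(1)] bipoly_mult.hyps(2)]
                  dderiv_mult[OF bipoly_mult.hyps(1) bipoly_dderiv[OF bipoly_mult.hyps(2)]])
  show ?case unfolding split second using bipoly_mult.IH by (simp add: algebra_simps)
qed simp_all

lemma dderiv_linear:
  "bipoly P d \<Longrightarrow>
     dderiv P z w u v = (\<Sum>k\<in>UNIV. u $ k * dderiv P z w (axis k 1) 0 + v $ k * dderiv_snd P k z w)"
proof (induction arbitrary: z w rule: bipoly.induct)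
  case (bipoly_add P d Q)
  then show ?case by (simp add: dderiv_add sum.distrib algebra_simps)
next
  case (bipoly_mult P d Q e)
  then show ?case
    by (simp add: dderiv_mult sum.distrib sum_distrib_left sum_distrib_right algebra_simps)
qed (simp_all add: sum_mult_axis_1)

section \<open>Division and identity theorems\<close>

lemma bipoly_subst_fst:
  assumes L: "bipoly (\<lambda>z w. L w) 1"
  shows "bipoly P d \<Longrightarrow> bipoly (\<lambda>z w. P (vec_upd z p (L w)) w) d"
proof (induction rule: bipoly.induct)
  case (bipoly_fst j)
  show ?case
  proof (cases "j = p")
    case True
    show ?thesis by (rule bipoly_cong[OF L]) (simp add: True)
  next
    case False
    show ?thesis by (rule bipoly_cong[OF bipoly.bipoly_fst[of j]]) (simp add: False)
  qed
qed (auto intro: bipoly.intros)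

lemma bipoly_divide_linear:
  assumes L: "bipoly (\<lambda>z w. L w) 1"
  shows "bipoly P d \<Longrightarrow>
    \<exists>h. bipoly h (d - 1) \<and> (\<forall>z w. P z w - P (vec_upd z p (L w)) w = (z $ p - L w) * h z w)"
proof (induction rule: bipoly.induct)
  case (bipoly_const c)
  then show ?case by (intro exI[of _ "\<lambda>z w. 0"]) (auto intro: bipoly.bipoly_const)
next
  case (bipoly_fst j)
  show ?case
    by (rule exI[of _ "\<lambda>z w. if j = p then 1 else 0"]) (auto intro: bipoly.bipoly_const)
next
  case (bipoly_snd j)
  then show ?case by (intro exI[of _ "\<lambda>z w. 0"]) (auto intro: bipoly.bipoly_const)
next
  case (bipoly_add P d Q)
  then obtain h1 h2 where "bipoly h1 (d - 1)" "\<forall>z w. P z w - P (vec_upd z p (L w)) w = (z $ p - L w) * h1 z w"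
     "bipoly h2 (d - 1)" "\<forall>z w. Q z w - Q (vec_upd z p (L w)) w = (z $ p - L w) * h2 z w" by blast
  then show ?case
    by (intro exI[of _ "\<lambda>z w. h1 z w + h2 z w"] conjI bipoly.bipoly_add) (auto simp: algebra_simps)
next
  case (bipoly_mult P d Q e)
  obtain h1 where h1: "bipoly h1 (d - 1)" "\<And>z w. P z w - P (vec_upd z p (L w)) w = (z $ p - L w) * h1 z w"
    using bipoly_mult.IH by blast
  obtain h2 where h2: "bipoly h2 (e - 1)" "\<And>z w. Q z w - Q (vec_upd z p (L w)) w = (z $ p - L w) * h2 z w"
    using bipoly_mult.IH by blast
  consider "d = 0" | "e = 0" | "d > 0" "e > 0" by auto
  then show ?case
  proof cases
    case 1
    then obtain c where P: "P = (\<lambda>z w. c)" using bipoly_degree_0 bipoly_mult.hyps by blast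
    show ?thesis
    proof (intro exI[of _ "\<lambda>z w. c * h2 z w"] conjI allI)
      show "bipoly (\<lambda>z w. c * h2 z w) (d + e - 1)" using bipoly_cmult[OF h2(1)] 1 by simp
    qed (simp add: P flip: right_diff_distrib h2(2))
  next
    case 2
    then obtain c where Q: "Q = (\<lambda>z w. c)" using bipoly_degree_0 bipoly_mult.hyps by blast
    show ?thesis
    proof (intro exI[of _ "\<lambda>z w. c * h1 z w"] conjI allI)
      show "bipoly (\<lambda>z w. c * h1 z w) (d + e - 1)" using bipoly_cmult[OF h1(1)] 2 by simp
    qed (simp add: Q flip: left_diff_distrib h1(2))
  next
    case 3
    let ?P' = "\<lambda>z w. P (vec_upd z p (L w)) w" and ?Q' = "\<lambda>z w. Q (vec_upd z p (L w)) w"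
    have "bipoly (\<lambda>z w. h1 z w * Q z w) (d + e - 1)"
      using bipoly.bipoly_mult[OF h1(1) bipoly_mult.hyps(2)] 3 by (auto elim: bipoly_mono)
    moreover have "bipoly (\<lambda>z w. ?P' z w * h2 z w) (d + e - 1)"
      using bipoly.bipoly_mult[OF bipoly_subst_fst[OF L bipoly_mult.hyps(1)] h2(1)] 3 by (auto elim: bipoly_mono)
    moreover have "P z w * Q z w - ?P' z w * ?Q' z w = (z $ p - L w) * (h1 z w * Q z w + ?P' z w * h2 z w)" for z w
    proof -
      have "P z w * Q z w - ?P' z w * ?Q' z w = (P z w - ?P' z w) * Q z w + ?P' z w * (Q z w - ?Q' z w)"
        by (simp add: algebra_simps)
      then show ?thesis by (simp add: h1(2) h2(2) algebra_simps)
    qed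
    ultimately show ?thesis using bipoly.bipoly_add by blast
  qed
next
  case (bipoly_mono P d e)
  then show ?case by (meson diff_le_mono bipoly.bipoly_mono)
qed

lemma bipoly_eq_0_on_punctured_line:
  assumes "bipoly P d" and zero: "\<And>t. t \<noteq> c \<Longrightarrow> P (z + t *s u) (w + t *s v) = 0"
  shows "P z w = 0"
proof -
  let ?f = "\<lambda>t. P (z + t *s u) (w + t *s v)"
  have "(?f \<longlongrightarrow> ?f 0) (at 0)"
    using bipoly_line_continuous[OF assms(1)] isCont_def by blast
  moreover have "eventually (\<lambda>t. ?f t = 0) (at 0)"
    using eventually_neq_at_within[of c 0 UNIV] by eventually_elim (use zero in auto)
  then have "(?f \<longlongrightarrow> 0) (at 0)" by (simp add: tendsto_eventually)
  ultimately show ?thesis using tendsto_unique at_neq_bot by fastforce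
qed

lemma bipoly_eq_on_punctured_line:
  assumes "bipoly P d" "bipoly Q e"
    and eq: "\<And>t. t \<noteq> c \<Longrightarrow> P (z + t *s u) (w + t *s v) = Q (z + t *s u) (w + t *s v)"
  shows "P z w = Q z w"
proof -
  have "bipoly P (max d e)" "bipoly Q (max d e)" using assms(1,2) by (auto elim: bipoly_mono)
  then have "bipoly (\<lambda>z w. P z w - Q z w) (max d e)" by (rule bipoly_diff)
  from bipoly_eq_0_on_punctured_line[OF this, of c z u w v] eq show ?thesis by simp
qed

lemma bipoly_eq_0_on_real_line:
  assumes "bipoly P d" and zero: "\<And>r. r \<in> \<real> \<Longrightarrow> P (z + r *s u) (w + r *s v) = 0"
  shows "P (z + t *s u) (w + t *s v) = 0"
proof (rule analytic_continuation[of "\<lambda>t. P (z + t *s u) (w + t *s v)" UNIV \<real> 0])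
  show "(\<lambda>t. P (z + t *s u) (w + t *s v)) holomorphic_on UNIV"
    using bipoly_line_holomorphic[OF assms(1)] field_differentiable_at_within holomorphic_on_def by blast
  show "(0::complex) islimpt \<real>"
    unfolding islimpt_approachable
  proof (intro allI impI)
    fix e :: real assume "e > 0"
    then show "\<exists>x'::complex\<in>\<real>. x' \<noteq> 0 \<and> dist x' 0 < e"
      by (intro bexI[of _ "complex_of_real (e/2)"]) (auto simp: dist_norm)
  qed
qed (use zero in auto)

lemma bipoly_eq_0_if_eq_0_on_reals:
  fixes E :: "complex^'n::finite \<Rightarrow> complex^'n \<Rightarrow> complex"
  assumes E: "bipoly E d" and zero: "\<And>x y. \<forall>k. x $ k \<in> \<real> \<Longrightarrow> \<forall>k. y $ k \<in> \<real> \<Longrightarrow> E x y = 0"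
  shows "E x y = 0"
proof -
  have x_real: "\<forall>x y. (\<forall>k. x $ k \<in> \<real>) \<longrightarrow> (\<forall>k. k \<notin> K \<longrightarrow> y $ k \<in> \<real>) \<longrightarrow> E x y = 0"
    if "finite K" for K :: "'n set"
    using that
  proof (induction K rule: finite_induct)
    case (insert k K)
    show ?case
    proof (intro allI impI)
      fix x y :: "complex^'n"
      assume x: "\<forall>k. x $ k \<in> \<real>" and y: "\<forall>m. m \<notin> insert k K \<longrightarrow> y $ m \<in> \<real>"
      have line: "E x (vec_upd y k t) = E (x + t *s 0) (vec_upd y k 0 + t *s axis k 1)" for t
        by (rule arg_cong2[where f=E]) (simp_all add: vec_eq_iff axis_def)
      have "E x (vec_upd y k t) = 0" for t
        unfolding line
      proof (rule bipoly_eq_0_on_real_line[OF E])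
        fix r :: complex assume "r \<in> \<real>"
        then have "E x (vec_upd y k r) = 0" using insert.IH x y by auto
        then show "E (x + r *s 0) (vec_upd y k 0 + r *s axis k 1) = 0" by (simp only: line)
      qed
      then show "E x y = 0" by (metis vec_upd_same)
    qed
  qed (use zero in auto)
  have "\<forall>x y. (\<forall>k. k \<notin> K \<longrightarrow> x $ k \<in> \<real>) \<longrightarrow> E x y = 0" if "finite K" for K :: "'n set"
    using that
  proof (induction K rule: finite_induct)
    case (insert k K)
    show ?case
    proof (intro allI impI)
      fix x y :: "complex^'n" assume x: "\<forall>m. m \<notin> insert k K \<longrightarrow> x $ m \<in> \<real>"
      have line: "E (vec_upd x k t) y = E (vec_upd x k 0 + t *s axis k 1) (y + t *s 0)" for t
        by (rule arg_cong2[where f=E]) (simp_all add: vec_eq_iff axis_def)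
      have "E (vec_upd x k t) y = 0" for t
        unfolding line
      proof (rule bipoly_eq_0_on_real_line[OF E])
        fix r :: complex assume "r \<in> \<real>"
        then have "E (vec_upd x k r) y = 0" using insert.IH x by auto
        then show "E (vec_upd x k 0 + r *s axis k 1) (y + r *s 0) = 0" by (simp only: line)
      qed
      then show "E x y = 0" by (metis vec_upd_same)
    qed
  qed (use x_real[of UNIV] in auto)
  then show ?thesis by auto
qed

lemma bipoly_real_coordinates: "bipoly P d \<Longrightarrow> bipoly (\<lambda>x y. P (x + \<i> *s y) (x - \<i> *s y)) d"
proof (induction rule: bipoly.induct)
  case (bipoly_fst j)
  show ?case
    by (rule bipoly_cong[OF bipoly_add[OF bipoly.bipoly_fst bipoly_cmult[OF bipoly.bipoly_snd]]]) simp
next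
  case (bipoly_snd j)
  show ?case
    by (rule bipoly_cong[OF bipoly_diff[OF bipoly.bipoly_fst bipoly_cmult[OF bipoly.bipoly_snd]]]) simp
qed (auto intro: bipoly.intros)

text \<open>The totally real subspace \<open>w = cnj z\<close> becomes \<open>\<real>\<^sup>n \<times> \<real>\<^sup>n\<close> in the coordinates
  \<open>z = x + \<i> y\<close>, \<open>w = x - \<i> y\<close>.\<close>

lemma bipoly_eq_0_if_eq_0_on_conj:
  fixes D :: "complex^'n::finite \<Rightarrow> complex^'n \<Rightarrow> complex"
  assumes D: "bipoly D d" and zero: "\<And>z. D z (vconj z) = 0"
  shows "D z w = 0"
proof -
  have "D (x + \<i> *s y) (x - \<i> *s y) = 0" for x y :: "complex^'n"
  proof (rule bipoly_eq_0_if_eq_0_on_reals[OF bipoly_real_coordinates[OF D]])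
    fix x y :: "complex^'n" assume "\<forall>k. x $ k \<in> \<real>" "\<forall>k. y $ k \<in> \<real>"
    then have "vconj (x + \<i> *s y) = x - \<i> *s y"
      by (simp add: vec_eq_iff Reals_cnj_iff)
    then show "D (x + \<i> *s y) (x - \<i> *s y) = 0" using zero by metis
  qed
  moreover have "(1/2) *s (z + w) + \<i> *s ((1/(2*\<i>)) *s (z - w)) = z"
    and "(1/2) *s (z + w) - \<i> *s ((1/(2*\<i>)) *s (z - w)) = w"
    by (simp_all add: vec_eq_iff field_simps)
  ultimately show ?thesis by metis
qed

section \<open>Polynomials in \<open>(z, s)\<close>\<close>

inductive zs_poly :: "(complex^'n::finite \<Rightarrow> complex \<Rightarrow> complex) \<Rightarrow> bool" where
  zs_poly_const: "zs_poly (\<lambda>z s. c)"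
| zs_poly_z: "zs_poly (\<lambda>z s. z $ j)"
| zs_poly_s: "zs_poly (\<lambda>z s. s)"
| zs_poly_add: "zs_poly F \<Longrightarrow> zs_poly G \<Longrightarrow> zs_poly (\<lambda>z s. F z s + G z s)"
| zs_poly_mult: "zs_poly F \<Longrightarrow> zs_poly G \<Longrightarrow> zs_poly (\<lambda>z s. F z s * G z s)"

lemma zs_poly_cong: "zs_poly F \<Longrightarrow> (\<And>z s. F z s = G z s) \<Longrightarrow> zs_poly G"
proof -
  assume "zs_poly F" "\<And>z s. F z s = G z s"
  then have "F = G" by (intro ext)
  with \<open>zs_poly F\<close> show ?thesis by simp
qed

lemma zs_poly_diff: "zs_poly F \<Longrightarrow> zs_poly G \<Longrightarrow> zs_poly (\<lambda>z s. F z s - G z s)"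
  by (rule zs_poly_cong[OF zs_poly_add[OF _ zs_poly_mult[OF zs_poly_const[of "-1"]]]]) auto

lemma zs_poly_sum: "finite S \<Longrightarrow> (\<And>x. x \<in> S \<Longrightarrow> zs_poly (F x)) \<Longrightarrow> zs_poly (\<lambda>z s. \<Sum>x\<in>S. F x z s)"
  by (induction S rule: finite_induct) (auto intro: zs_poly.intros zs_poly_const[of 0, simplified])

lemma zs_poly_prod: "finite S \<Longrightarrow> (\<And>x. x \<in> S \<Longrightarrow> zs_poly (F x)) \<Longrightarrow> zs_poly (\<lambda>z s. \<Prod>x\<in>S. F x z s)"
  by (induction S rule: finite_induct) (auto intro: zs_poly.intros zs_poly_const[of 1, simplified])

lemma zs_poly_power: "zs_poly F \<Longrightarrow> zs_poly (\<lambda>z s. F z s ^ n)"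
  by (induction n) (auto intro: zs_poly.intros zs_poly_const[of 1, simplified])

lemma zs_poly_monomial: "zs_poly (\<lambda>z s. c * mono \<alpha> z * s ^ k)"
  unfolding mono_def by (intro zs_poly_mult zs_poly_const zs_poly_prod zs_poly_power zs_poly.intros) simp

lemma zs_poly_comp: "zs_poly F \<Longrightarrow> zs_poly (\<lambda>z s. E z) \<Longrightarrow> zs_poly (\<lambda>z s. F z (E z))"
  by (induction rule: zs_poly.induct) (auto intro: zs_poly.intros)

lemma zs_poly_bipoly_at_0: "bipoly P d \<Longrightarrow> zs_poly (\<lambda>z s. P z 0)"
  by (induction rule: bipoly.induct) (auto intro: zs_poly.intros)

lemma mono_zero [simp]: "mono (\<lambda>_. 0) z = 1"
  by (simp add: mono_def)

lemma mono_indicator: "mono (\<lambda>k. if k = j then 1 else 0) z = z $ j"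
proof -
  have "mono (\<lambda>k. if k = j then 1 else 0) z = (\<Prod>k\<in>UNIV. if k = j then z $ k else 1)"
    unfolding mono_def by (rule prod.cong) auto
  then show ?thesis by simp
qed

lemma mono_add: "mono (\<lambda>k. \<alpha> k + \<beta> k) z = mono \<alpha> z * mono \<beta> z"
  unfolding mono_def by (simp add: power_add prod.distrib)

lemma mono_smult: "mono \<alpha> (\<tau> *s z) = \<tau> ^ mdeg \<alpha> * mono \<alpha> z"
  unfolding mono_def mdeg_def by (simp add: power_mult_distrib prod.distrib power_sum)

lemma poly_zs_indexed:
  fixes T :: "'b set"
  assumes "finite T"
    and F: "\<And>z s. F z s = (\<Sum>x\<in>T. d x * mono (\<phi> x) z * s ^ \<psi> x)"
  shows "poly_zs F"
proof -
  define g where "g x = (\<phi> x, \<psi> x)" for x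
  define c where "c y = (\<Sum>x\<in>{x\<in>T. g x = y}. d x)" for y
  have "F z s = (\<Sum>(\<alpha>,k)\<in>g ` T. c (\<alpha>,k) * mono \<alpha> z * s ^ k)" for z s
  proof -
    have "F z s = (\<Sum>y\<in>g ` T. \<Sum>x\<in>{x\<in>T. g x = y}. d x * mono (\<phi> x) z * s ^ \<psi> x)"
      unfolding F by (rule sum.image_gen[OF \<open>finite T\<close>])
    also have "\<dots> = (\<Sum>(\<alpha>,k)\<in>g ` T. c (\<alpha>,k) * mono \<alpha> z * s ^ k)"
    proof (rule sum.cong[OF refl])
      fix y assume "y \<in> g ` T"
      obtain \<alpha> k where y: "y = (\<alpha>, k)" by fastforce
      have "(\<Sum>x\<in>{x\<in>T. g x = y}. d x * mono (\<phi> x) z * s ^ \<psi> x)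
          = (\<Sum>x\<in>{x\<in>T. g x = y}. d x * mono \<alpha> z * s ^ k)"
        by (rule sum.cong) (auto simp: g_def y)
      then show "(\<Sum>x\<in>{x\<in>T. g x = y}. d x * mono (\<phi> x) z * s ^ \<psi> x)
          = (case y of (\<alpha>, k) \<Rightarrow> c (\<alpha>, k) * mono \<alpha> z * s ^ k)"
        unfolding c_def y by (simp add: sum_distrib_right)
    qed
    finally show ?thesis .
  qed
  then show ?thesis unfolding poly_zs_def using \<open>finite T\<close> by blast
qed

lemma poly_zsE:
  assumes "poly_zs F"
  obtains S c where "finite S" "\<And>z s. F z s = (\<Sum>x\<in>S. c x * mono (fst x) z * s ^ snd x)"
proof -
  from assms obtain S c where "finite S" "\<And>z s. F z s = (\<Sum>(\<alpha>,k)\<in>S. c (\<alpha>,k) * mono \<alpha> z * s ^ k)"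
    unfolding poly_zs_def by blast
  then show ?thesis using that[of S c] by (simp add: case_prod_unfold)
qed

lemma poly_zs_if_zs_poly: "zs_poly F \<Longrightarrow> poly_zs F"
proof (induction rule: zs_poly.induct)
  case (zs_poly_const c)
  show ?case by (rule poly_zs_indexed[of "{()}" _ "\<lambda>_. c" "\<lambda>_ _. 0" "\<lambda>_. 0"]) auto
next
  case (zs_poly_z j)
  show ?case
    by (rule poly_zs_indexed[of "{()}" _ "\<lambda>_. 1" "\<lambda>_ k. if k = j then 1 else 0" "\<lambda>_. 0"])
       (auto simp: mono_indicator)
next
  case zs_poly_s
  show ?case by (rule poly_zs_indexed[of "{()}" _ "\<lambda>_. 1" "\<lambda>_ _. 0" "\<lambda>_. 1"]) auto
next
  case (zs_poly_add F G)
  obtain S1 c1 where S1: "finite S1" "\<And>z s. F z s = (\<Sum>x\<in>S1. c1 x * mono (fst x) z * s ^ snd x)"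
    using poly_zsE[OF zs_poly_add.IH(1)] by blast
  obtain S2 c2 where S2: "finite S2" "\<And>z s. G z s = (\<Sum>x\<in>S2. c2 x * mono (fst x) z * s ^ snd x)"
    using poly_zsE[OF zs_poly_add.IH(2)] by blast
  show ?case
    by (rule poly_zs_indexed[of "S1 <+> S2" _ "case_sum c1 c2" "case_sum fst fst" "case_sum snd snd"])
       (auto simp: S1 S2 sum.Plus o_def)
next
  case (zs_poly_mult F G)
  obtain S1 c1 where S1: "finite S1" "\<And>z s. F z s = (\<Sum>x\<in>S1. c1 x * mono (fst x) z * s ^ snd x)"
    using poly_zsE[OF zs_poly_mult.IH(1)] by blast
  obtain S2 c2 where S2: "finite S2" "\<And>z s. G z s = (\<Sum>x\<in>S2. c2 x * mono (fst x) z * s ^ snd x)"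
    using poly_zsE[OF zs_poly_mult.IH(2)] by blast
  show ?case
  proof (rule poly_zs_indexed[of "S1 \<times> S2" _ "\<lambda>(x,y). c1 x * c2 y" "\<lambda>(x,y) k. fst x k + fst y k"
       "\<lambda>(x,y). snd x + snd y"])
    show "finite (S1 \<times> S2)" using S1 S2 by simp
    fix z s
    have "F z s * G z s = (\<Sum>(x,y)\<in>S1 \<times> S2.
        (c1 x * mono (fst x) z * s ^ snd x) * (c2 y * mono (fst y) z * s ^ snd y))"
      unfolding S1 S2 sum_product sum.cartesian_product ..
    also have "\<dots> = (\<Sum>xy\<in>S1 \<times> S2. (case xy of (x,y) \<Rightarrow> c1 x * c2 y)
        * mono (case xy of (x,y) \<Rightarrow> (\<lambda>k. fst x k + fst y k)) z * s ^ (case xy of (x,y) \<Rightarrow> snd x + snd y))"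
      by (rule sum.cong) (auto simp: mono_add power_add)
    finally show "F z s * G z s = \<dots>" .
  qed
qed

lemma zs_poly_antiderivative:
  assumes "zs_poly H"
  obtains G where "zs_poly G" "\<And>z s. (G z has_field_derivative H z s) (at s)"
proof -
  obtain S c where S: "finite S" "\<And>z s. H z s = (\<Sum>x\<in>S. c x * mono (fst x) z * s ^ snd x)"
    using poly_zsE[OF poly_zs_if_zs_poly[OF assms]] by blast
  define G where "G z s = (\<Sum>x\<in>S. c x / of_nat (Suc (snd x)) * mono (fst x) z * s ^ Suc (snd x))" for z s
  have "zs_poly G"
    unfolding G_def by (rule zs_poly_sum[OF S(1)]) (rule zs_poly_monomial)
  moreover have "(G z has_field_derivative H z s) (at s)" for z s
  proof -
    have "((\<lambda>s. c x / of_nat (Suc (snd x)) * mono (fst x) z * s ^ Suc (snd x)) has_field_derivative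
       c x / of_nat (Suc (snd x)) * mono (fst x) z * (of_nat (Suc (snd x)) * s ^ snd x)) (at s)" for x
      by (intro DERIV_cmult) (use DERIV_power[OF DERIV_ident, where n="Suc (snd x)" and x=s] in simp)
    moreover have "c x / of_nat (Suc (snd x)) * mono (fst x) z * (of_nat (Suc (snd x)) * s ^ snd x)
        = c x * mono (fst x) z * s ^ snd x" for x
      by (simp add: field_simps del: of_nat_Suc)
    ultimately have "((\<lambda>s. c x / of_nat (Suc (snd x)) * mono (fst x) z * s ^ Suc (snd x)) has_field_derivative
       c x * mono (fst x) z * s ^ snd x) (at s)" for x
      by simp
    then have "(G z has_field_derivative (\<Sum>x\<in>S. c x * mono (fst x) z * s ^ snd x)) (at s)"
      unfolding G_def by (intro DERIV_sum)
    then show ?thesis unfolding S(2) .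
  qed
  ultimately show ?thesis using that by blast
qed

section \<open>Polynomials with \<open>w\<close>-gradient parallel to that of \<open>Q\<close>\<close>

definition w_gradients_parallel ::
  "(complex^'n::finite \<Rightarrow> complex^'n \<Rightarrow> complex) \<Rightarrow> (complex^'n \<Rightarrow> complex^'n \<Rightarrow> complex) \<Rightarrow> bool"
  where "w_gradients_parallel P Q \<longleftrightarrow>
    (\<forall>j k z w. dderiv_snd P j z w * dderiv_snd Q k z w = dderiv_snd P k z w * dderiv_snd Q j z w)"

text \<open>The two partial derivatives \<open>\<partial>Q/\<partial>w\<^sub>p = z\<^sub>p - L\<^sub>p(w)\<close>, \<open>p \<in> {p\<^sub>1, p\<^sub>2}\<close>, are coprime:
  \<open>\<partial>P/\<partial>w\<^sub>p\<^sub>1\<close> vanishes on \<open>z\<^sub>p\<^sub>1 = L\<^sub>1(w)\<close> because \<open>\<partial>Q/\<partial>w\<^sub>p\<^sub>2\<close> is generically nonzero there,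
  so it is divisible by \<open>\<partial>Q/\<partial>w\<^sub>p\<^sub>1\<close>, and the quotient is the common factor of all components.\<close>

lemma w_gradient_factor:
  fixes Q P :: "complex^'n::finite \<Rightarrow> complex^'n \<Rightarrow> complex"
  assumes Q: "bipoly Q 2" and "p1 \<noteq> p2"
    and Q1: "\<And>z w. dderiv_snd Q p1 z w = z $ p1 - L1 w" and L1: "bipoly (\<lambda>z w. L1 w) 1"
    and Q2: "\<And>z w. dderiv_snd Q p2 z w = z $ p2 - L2 w"
    and P: "bipoly P d" and par: "w_gradients_parallel P Q"
  obtains h where "bipoly h (d - 2)" "\<And>k z w. dderiv_snd P k z w = h z w * dderiv_snd Q k z w"
proof -
  define g where "g j z w = dderiv_snd Q j z w" for j z w
  define dP where "dP j z w = dderiv_snd P j z w" for j z w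
  have g: "bipoly (g j) 1" for j unfolding g_def using bipoly_dderiv[OF Q] by simp
  have dP: "bipoly (dP j) (d - 1)" for j unfolding dP_def using bipoly_dderiv[OF P] by simp
  have cross: "dP j z w * g k z w = dP k z w * g j z w" for j k z w
    using par unfolding w_gradients_parallel_def dP_def g_def by blast
  have vanish: "dP p1 z w = 0" if "z $ p1 = L1 w" for z w
  proof (rule bipoly_eq_0_on_punctured_line[OF dP, where c = "- (z $ p2 - L2 w)" and u = "axis p2 1" and v = 0])
    fix t assume t: "t \<noteq> - (z $ p2 - L2 w)"
    let ?z = "z + t *s axis p2 1"
    have "g p1 ?z w = 0" unfolding g_def Q1 using that \<open>p1 \<noteq> p2\<close> by (simp add: axis_def)
    moreover have "g p2 ?z w \<noteq> 0" unfolding g_def Q2 using t by (simp add: algebra_simps)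
    ultimately show "dP p1 ?z (w + t *s 0) = 0" using cross[of p1 ?z w p2] by simp
  qed
  obtain h where h: "bipoly h (d - 1 - 1)"
    and div: "\<And>z w. dP p1 z w - dP p1 (vec_upd z p1 (L1 w)) w = (z $ p1 - L1 w) * h z w"
    using bipoly_divide_linear[OF L1 dP, of p1] by blast
  have factor1: "dP p1 z w = g p1 z w * h z w" for z w
    using div[of z w] vanish[of "vec_upd z p1 (L1 w)" w] unfolding g_def Q1 by simp
  have "dP k z w = h z w * g k z w" for k z w
  proof (rule bipoly_eq_on_punctured_line[OF dP bipoly_mult[OF h g],
        where c = "- (z $ p1 - L1 w)" and u = "axis p1 1" and v = 0])
    fix t assume t: "t \<noteq> - (z $ p1 - L1 w)"
    let ?z = "z + t *s axis p1 1"
    have "g p1 ?z w \<noteq> 0" unfolding g_def Q1 using t by (simp add: algebra_simps)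
    moreover have "dP k ?z w * g p1 ?z w = h ?z w * g k ?z w * g p1 ?z w"
      using cross[of k ?z w p1] factor1[of ?z w] by (simp add: algebra_simps)
    ultimately show "dP k ?z (w + t *s 0) = h ?z (w + t *s 0) * g k ?z (w + t *s 0)"
      by simp
  qed
  then show ?thesis using that h unfolding dP_def g_def by (simp add: numeral_2_eq_2)
qed

lemma w_gradients_parallel_factor:
  assumes P: "bipoly P d" and Q: "bipoly Q e" and h: "bipoly h d'"
    and factor: "\<And>k z w. dderiv_snd P k z w = h z w * dderiv_snd Q k z w"
  shows "w_gradients_parallel h Q"
  unfolding w_gradients_parallel_def
proof (intro allI)
  fix j k z w
  have factor_fun: "(\<lambda>z w. dderiv_snd P k z w) = (\<lambda>z w. h z w * dderiv_snd Q k z w)" for k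
    using factor by (intro ext) simp
  have "dderiv_snd (\<lambda>z w. h z w * dderiv_snd Q k z w) j z w
      = dderiv_snd (\<lambda>z w. h z w * dderiv_snd Q j z w) k z w"
    using dderiv_commute[OF P, of 0 "axis k 1" z w 0 "axis j 1"] unfolding factor_fun .
  moreover have "dderiv_snd (\<lambda>z w. dderiv_snd Q k z w) j z w = dderiv_snd (\<lambda>z w. dderiv_snd Q j z w) k z w"
    by (rule dderiv_commute[OF Q])
  ultimately show "dderiv_snd h j z w * dderiv_snd Q k z w = dderiv_snd h k z w * dderiv_snd Q j z w"
    by (simp add: dderiv_mult[OF h bipoly_dderiv[OF Q]])
qed

text \<open>If \<open>\<nabla>\<^sub>wP = H(z, Q) \<nabla>\<^sub>wQ\<close> and \<open>G\<close> is an antiderivative of \<open>H\<close> in \<open>s\<close>, then \<open>P - G(z, Q)\<close> has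
  vanishing \<open>w\<close>-derivatives, hence depends on \<open>z\<close> only.\<close>

lemma factors_through_if_w_gradient_multiple:
  fixes Q P :: "complex^'n::finite \<Rightarrow> complex^'n \<Rightarrow> complex"
  assumes P: "bipoly P d" and Q: "bipoly Q e" and H: "zs_poly H"
    and factor: "\<And>k z w. dderiv_snd P k z w = H z (Q z w) * dderiv_snd Q k z w"
  shows "\<exists>F. zs_poly F \<and> (\<forall>z w. P z w = F z (Q z w))"
proof -
  obtain G where G: "zs_poly G" "\<And>z s. (G z has_field_derivative H z s) (at s)"
    using zs_poly_antiderivative[OF H] by blast
  define R where "R z w = P z w - G z (Q z w)" for z w
  have R_const: "R z w = R z 0" for z w
  proof -
    define \<phi> where "\<phi> t = R z (t *s w)" for t
    have "(\<phi> has_field_derivative 0) (at t0)" for t0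
    proof -
      have dderiv_eq: "dderiv P z x 0 w = H z (Q z x) * dderiv Q z x 0 w" for x
        using dderiv_linear[OF P, of z x 0 w] dderiv_linear[OF Q, of z x 0 w]
        by (simp add: factor sum_distrib_left mult.left_commute)
      have "((\<lambda>t. P (z + t *s 0) (0 + t *s w)) has_field_derivative
          dderiv P (z + t0 *s 0) (0 + t0 *s w) 0 w) (at t0)"
        and "((\<lambda>t. Q (z + t *s 0) (0 + t *s w)) has_field_derivative
          dderiv Q (z + t0 *s 0) (0 + t0 *s w) 0 w) (at t0)"
        by (rule bipoly_has_dderiv_at[OF P], rule bipoly_has_dderiv_at[OF Q])
      then have "((\<lambda>t. P z (t *s w) - G z (Q z (t *s w))) has_field_derivative
          dderiv P z (t0 *s w) 0 w - H z (Q z (t0 *s w)) * dderiv Q z (t0 *s w) 0 w) (at t0)"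
        by (intro DERIV_diff DERIV_chain'[where g="G z"]) (auto intro: G(2))
      then show ?thesis unfolding \<phi>_def R_def dderiv_eq by simp
    qed
    then have "\<phi> 1 = \<phi> 0"
      using has_field_derivative_zero_constant[of UNIV \<phi>] by (metis UNIV_I convex_UNIV)
    then show ?thesis unfolding \<phi>_def by simp
  qed
  define F where "F z s = G z s + (P z 0 - G z (Q z 0))" for z s
  have "zs_poly (\<lambda>z s. G z (Q z 0))"
    by (rule zs_poly_comp[OF G(1) zs_poly_bipoly_at_0[OF Q]])
  then have "zs_poly F"
    unfolding F_def by (intro zs_poly_add[OF G(1)] zs_poly_diff[OF zs_poly_bipoly_at_0[OF P]])
  moreover have "P z w = F z (Q z w)" for z w
    using R_const[of z w] unfolding R_def F_def by (simp add: algebra_simps)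
  ultimately show ?thesis by blast
qed

theorem bipoly_factors_through:
  fixes Q P :: "complex^'n::finite \<Rightarrow> complex^'n \<Rightarrow> complex"
  assumes Q: "bipoly Q 2" and "p1 \<noteq> p2"
    and Q1: "\<And>z w. dderiv_snd Q p1 z w = z $ p1 - L1 w" and L1: "bipoly (\<lambda>z w. L1 w) 1"
    and Q2: "\<And>z w. dderiv_snd Q p2 z w = z $ p2 - L2 w"
  shows "bipoly P d \<Longrightarrow> w_gradients_parallel P Q \<Longrightarrow> \<exists>F. zs_poly F \<and> (\<forall>z w. P z w = F z (Q z w))"
proof (induction d arbitrary: P rule: less_induct)
  case (less d P)
  show ?case
  proof (cases "d = 0")
    case True
    then obtain c where "P = (\<lambda>z w. c)" using bipoly_degree_0 less.prems(1) by blast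
    then show ?thesis using zs_poly_const by blast
  next
    case False
    obtain h where h: "bipoly h (d - 2)" and factor: "\<And>k z w. dderiv_snd P k z w = h z w * dderiv_snd Q k z w"
      using w_gradient_factor[OF assms less.prems] by blast
    have "w_gradients_parallel h Q"
      by (rule w_gradients_parallel_factor[OF less.prems(1) Q h factor])
    then obtain H where H: "zs_poly H" "\<forall>z w. h z w = H z (Q z w)"
      using less.IH[OF _ h] False by auto
    show ?thesis
      by (rule factors_through_if_w_gradient_multiple[OF less.prems(1) Q H(1)]) (simp add: factor H(2))
  qed
qed

section \<open>CR functions of the form \<open>P(z, cnj z)\<close>\<close>

lemma bipoly_conj_differentiable: "bipoly P d \<Longrightarrow> (\<lambda>z. P z (vconj z)) differentiable (at z)"
proof (induction rule: bipoly.induct)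
  case (bipoly_fst j)
  show ?case by (rule bounded_linear_imp_differentiable) (rule bounded_linear_vec_nth)
next
  case (bipoly_snd j)
  have "bounded_linear (\<lambda>z::complex^'a. cnj (z $ j))"
    using bounded_linear_compose[OF bounded_linear_cnj bounded_linear_vec_nth[of j]] by (simp add: o_def)
  then show ?case by (simp add: bounded_linear_imp_differentiable)
next
  case (bipoly_add P d Q)
  show ?case using differentiable_add[OF bipoly_add.IH] by simp
next
  case (bipoly_mult P d Q e)
  show ?case using differentiable_mult[OF bipoly_mult.IH] by simp
qed simp_all

text \<open>The real derivative of \<open>P(z, cnj z)\<close> in direction \<open>v\<close> is \<open>dderiv P z (cnj z) v (cnj v)\<close>,
  as both are the derivative along the real line \<open>t \<mapsto> z + t v\<close>.\<close>

lemma wirt_dbar_bipoly: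
  assumes P: "bipoly P d"
  shows "wirt_dbar (\<lambda>z. P z (vconj z)) j z = dderiv_snd P j z (vconj z)"
proof -
  let ?f = "\<lambda>z. P z (vconj z)"
  define D where "D = frechet_derivative ?f (at z)"
  have fd: "(?f has_derivative D) (at z)"
    using frechet_derivative_works bipoly_conj_differentiable[OF P] D_def by blast
  have D_eq: "D v = dderiv P z (vconj z) v (vconj v)" for v
  proof -
    have "((\<lambda>t::real. z + t *\<^sub>R v) has_derivative (\<lambda>t. t *\<^sub>R v)) (at 0)"
      by (auto intro!: derivative_eq_intros)
    then have "((?f \<circ> (\<lambda>t::real. z + t *\<^sub>R v)) has_derivative (D \<circ> (\<lambda>t. t *\<^sub>R v))) (at 0)"
      by (rule diff_chain_at) (simp add: fd)
    moreover have "(D \<circ> (\<lambda>t. t *\<^sub>R v)) = (\<lambda>t. t *\<^sub>R D v)"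
      using linear_cmul[OF has_derivative_linear[OF fd]] by (auto simp: o_def)
    ultimately have A: "((\<lambda>t::real. ?f (z + t *\<^sub>R v)) has_vector_derivative D v) (at 0)"
      unfolding has_vector_derivative_def by (simp add: o_def)
    have line: "?f (z + t *\<^sub>R v) = P (z + of_real t *s v) (vconj z + of_real t *s vconj v)" for t
      by (rule arg_cong2[where f=P]) (simp_all add: vec_eq_iff scaleR_conv_of_real[where 'a=complex])
    have "((\<lambda>s. P (z + s *s v) (vconj z + s *s vconj v)) has_field_derivative
        dderiv P z (vconj z) v (vconj v)) (at (of_real 0))"
      using bipoly_has_dderiv[OF P] by simp
    from has_vector_derivative_real_field[OF this]
    have "((\<lambda>t::real. ?f (z + t *\<^sub>R v)) has_vector_derivative dderiv P z (vconj z) v (vconj v)) (at 0)"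
      unfolding line .
    with A show ?thesis by (rule vector_derivative_unique_at)
  qed
  have axis_conj: "vconj (axis j 1) = axis j 1" "vconj (axis j \<i>) = axis j (- \<i>)"
    by (simp_all add: vec_eq_iff axis_def)
  have "dderiv P z (vconj z) (axis j a) (axis j b)
      = a * dderiv P z (vconj z) (axis j 1) 0 + b * dderiv_snd P j z (vconj z)" for a b
    using dderiv_linear[OF P, of z "vconj z" "axis j a" "axis j b"] by (simp add: sum.distrib sum_axis_mult)
  then show ?thesis
    unfolding wirt_dbar_def Let_def D_def[symmetric] D_eq axis_conj by (simp add: field_simps)
qed

text \<open>Identifying \<open>\<complex>\<^sup>n\<close> with \<open>\<real>\<^sup>2\<^sup>n\<close>, the CR space is the orthogonal complement of the real span of
  \<open>cnj G\<close> and \<open>\<i> cnj G\<close>, where \<open>G = \<partial>Q/\<partial>(cnj z)\<close>; if \<open>G \<noteq> 0\<close> these are orthogonal and nonzero.\<close>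

lemma mem_M_CR_if_dbar_nonzero:
  fixes Q :: "complex^'n::finite \<Rightarrow> real"
  assumes nz: "G j0 \<noteq> 0"
    and G: "\<And>j. G j = wirt_dbar (\<lambda>u. complex_of_real (Q u)) j z"
  shows "z \<in> M_CR Q"
proof -
  define p :: "complex^'n" where "p = (\<chi> j. cnj (G j))"
  define q :: "complex^'n" where "q = (\<chi> j. \<i> * cnj (G j))"
  have inner_p: "p \<bullet> a = Re (\<Sum>j\<in>UNIV. a $ j * G j)" for a
    unfolding p_def inner_vec_def by (simp add: inner_complex_def Re_sum mult.commute)
  have inner_q: "q \<bullet> a = Im (\<Sum>j\<in>UNIV. a $ j * G j)" for a
    unfolding q_def inner_vec_def by (simp add: inner_complex_def Im_sum algebra_simps)
  have CR: "CR_space Q z = {y. \<forall>x\<in>span {p, q}. orthogonal x y}"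
  proof (intro set_eqI iffI)
    fix a assume "a \<in> CR_space Q z"
    then have S: "(\<Sum>j\<in>UNIV. a $ j * G j) = 0" unfolding CR_space_def G by simp
    show "a \<in> {y. \<forall>x\<in>span {p, q}. orthogonal x y}"
    proof clarify
      fix x assume "x \<in> span {p, q}"
      then have "orthogonal a x"
        by (rule orthogonal_to_span)
           (auto simp: orthogonal_def inner_commute[of a p] inner_commute[of a q] inner_p inner_q S)
      then show "orthogonal x a" by (simp add: orthogonal_commute)
    qed
  next
    fix a assume "a \<in> {y. \<forall>x\<in>span {p, q}. orthogonal x y}"
    then have "orthogonal p a" "orthogonal q a" by (auto intro: span_base)
    then have "Re (\<Sum>j\<in>UNIV. a $ j * G j) = 0" "Im (\<Sum>j\<in>UNIV. a $ j * G j) = 0"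
      unfolding orthogonal_def inner_p inner_q by auto
    then show "a \<in> CR_space Q z" unfolding CR_space_def G by (simp add: complex_eq_iff)
  qed
  have pq: "p \<bullet> q = 0"
    unfolding inner_p q_def by (simp add: Re_sum complex_norm_square[symmetric] mult.assoc)
  have "p \<noteq> 0" "q \<noteq> 0" using nz unfolding p_def q_def by (auto simp: vec_eq_iff)
  moreover have "p \<noteq> q"
  proof
    assume "p = q"
    then have "cnj (G j0) = \<i> * cnj (G j0)" unfolding p_def q_def by (metis vec_lambda_beta)
    then have "(1 - \<i>) * cnj (G j0) = 0" by (simp add: algebra_simps)
    then show False using nz by simp
  qed
  ultimately have "dim (span {p, q}) = 2"
    using dim_eq_card_independent[OF pairwise_orthogonal_independent, of "{p, q}"] pq
    by (auto simp: pairwise_def orthogonal_def inner_commute)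
  moreover have "dim {y \<in> UNIV. \<forall>x \<in> span {p, q}. orthogonal x y} + dim (span {p, q})
      = dim (UNIV :: (complex^'n) set)"
    by (rule dim_subspace_orthogonal_to_vectors) auto
  ultimately have "dim (CR_space Q z) + 2 = CARD('n) * 2" unfolding CR by simp
  then show ?thesis unfolding M_CR_def by simp
qed

text \<open>Where \<open>\<partial>Q/\<partial>(cnj z) \<noteq> 0\<close>, the vector with entries \<open>\<partial>Q/\<partial>(cnj z\<^sub>k)\<close> at \<open>j\<close> and \<open>-\<partial>Q/\<partial>(cnj z\<^sub>j)\<close>
  at \<open>k\<close> is a CR vector; where it vanishes, the identity is trivial.\<close>

lemma CR_imp_w_gradients_parallel:
  fixes Q :: "complex^'n::finite \<Rightarrow> real"
  assumes Qc: "bipoly Qc e" and Q: "\<And>z. complex_of_real (Q z) = Qc z (vconj z)"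
    and P: "bipoly P d" and f: "\<And>z. f z = P z (vconj z)"
    and CR: "is_CR_on_MCR Q f"
  shows "w_gradients_parallel P Qc"
proof -
  have wirt_Q: "wirt_dbar (\<lambda>u. complex_of_real (Q u)) j z = dderiv_snd Qc j z (vconj z)" for j z
    unfolding Q by (rule wirt_dbar_bipoly[OF Qc])
  have wirt_f: "wirt_dbar f j z = dderiv_snd P j z (vconj z)" for j z
    unfolding f by (rule wirt_dbar_bipoly[OF P])
  have axis_sum: "(\<Sum>m\<in>UNIV. (axis j c - axis k c') $ m * X m) = c * X j - c' * (X k :: complex)"
    for j k c c' X by (simp add: left_diff_distrib sum_subtractf sum_axis_mult)
  have on_conj: "dderiv_snd P j z (vconj z) * dderiv_snd Qc k z (vconj z)
      - dderiv_snd P k z (vconj z) * dderiv_snd Qc j z (vconj z) = 0" for j k z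
  proof (cases "\<exists>j0. dderiv_snd Qc j0 z (vconj z) \<noteq> 0")
    case True
    then obtain j0 where "dderiv_snd Qc j0 z (vconj z) \<noteq> 0" by blast
    then have "z \<in> M_CR Q"
      by (rule mem_M_CR_if_dbar_nonzero) (simp add: wirt_Q)
    moreover have "axis j (dderiv_snd Qc k z (vconj z)) - axis k (dderiv_snd Qc j z (vconj z)) \<in> CR_space Q z"
      unfolding CR_space_def mem_Collect_eq wirt_Q axis_sum by (simp add: mult.commute)
    ultimately have "(\<Sum>m\<in>UNIV. (axis j (dderiv_snd Qc k z (vconj z)) - axis k (dderiv_snd Qc j z (vconj z))) $ m
        * dderiv_snd P m z (vconj z)) = 0"
      using CR unfolding is_CR_on_MCR_def wirt_f by blast
    then show ?thesis unfolding axis_sum by (simp add: mult.commute)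
  qed simp
  have "is_bipoly (\<lambda>z w. dderiv_snd P j z w)" "is_bipoly (\<lambda>z w. dderiv_snd Qc j z w)" for j
    using bipoly_dderiv[OF P] bipoly_dderiv[OF Qc] unfolding is_bipoly_def by blast+
  then have cross: "is_bipoly (\<lambda>z w. dderiv_snd P j z w * dderiv_snd Qc k z w - dderiv_snd P k z w * dderiv_snd Qc j z w)"
    for j k by simp
  show ?thesis
    unfolding w_gradients_parallel_def
  proof (intro allI)
    fix j k z w
    obtain D where "bipoly (\<lambda>z w. dderiv_snd P j z w * dderiv_snd Qc k z w
        - dderiv_snd P k z w * dderiv_snd Qc j z w) D"
      using cross unfolding is_bipoly_def by blast
    from bipoly_eq_0_if_eq_0_on_conj[OF this on_conj]
    show "dderiv_snd P j z w * dderiv_snd Qc k z w = dderiv_snd P k z w * dderiv_snd Qc j z w"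
      by simp
  qed
qed

section \<open>The quadric\<close>

definition sign_coeff :: "'n set \<Rightarrow> 'n set \<Rightarrow> 'n \<Rightarrow> complex" where
  "sign_coeff Pos Neg j = (if j \<in> Pos then 1 else if j \<in> Neg then -1 else 0)"

definition quadric_poly :: "'n set \<Rightarrow> 'n set \<Rightarrow> complex^'n^'n \<Rightarrow> complex^'n::finite \<Rightarrow> complex^'n \<Rightarrow> complex" where
  "quadric_poly Pos Neg b z w = (\<Sum>j\<in>UNIV. sign_coeff Pos Neg j * z $ j * w $ j)
     + (\<Sum>j\<in>UNIV. \<Sum>k\<in>UNIV. b $ j $ k * z $ j * z $ k)
     + (\<Sum>j\<in>UNIV. \<Sum>k\<in>UNIV. cnj (b $ j $ k) * w $ j * w $ k)"

lemma bipoly_quadric_poly: "bipoly (quadric_poly Pos Neg b) 2"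
proof -
  have "bipoly (\<lambda>z w. \<Sum>j\<in>UNIV. sign_coeff Pos Neg j * z $ j * w $ j) 2"
    using bipoly_mult[OF bipoly_mult[OF bipoly_const bipoly_fst] bipoly_snd]
    by (intro bipoly_sum) (simp_all add: numeral_2_eq_2)
  moreover have "bipoly (\<lambda>z w. \<Sum>j\<in>UNIV. \<Sum>k\<in>UNIV. b $ j $ k * z $ j * z $ k) 2"
    using bipoly_mult[OF bipoly_mult[OF bipoly_const bipoly_fst] bipoly_fst]
    by (intro bipoly_sum) (simp_all add: numeral_2_eq_2)
  moreover have "bipoly (\<lambda>z w. \<Sum>j\<in>UNIV. \<Sum>k\<in>UNIV. cnj (b $ j $ k) * w $ j * w $ k) 2"
    using bipoly_mult[OF bipoly_mult[OF bipoly_const bipoly_snd] bipoly_snd]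
    by (intro bipoly_sum) (simp_all add: numeral_2_eq_2)
  ultimately show ?thesis
    unfolding quadric_poly_def[abs_def] by (intro bipoly_add)
qed

lemma quadric_poly_conj:
  assumes "Pos \<inter> Neg = {}"
  shows "quadric_poly Pos Neg b z (vconj z)
    = complex_of_real (herm_form Pos Neg z) + bilin b z + cnj (bilin b z)"
proof -
  have sign: "sign_coeff Pos Neg j * x = (if j \<in> Pos then x else 0) - (if j \<in> Neg then x else 0)" for j x
    using assms by (auto simp: sign_coeff_def)
  have "(\<Sum>j\<in>UNIV. sign_coeff Pos Neg j * z $ j * cnj (z $ j))
      = (\<Sum>j\<in>UNIV. sign_coeff Pos Neg j * complex_of_real ((cmod (z $ j))\<^sup>2))"
    by (rule sum.cong[OF refl]) (simp add: complex_norm_square[symmetric] mult.assoc)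
  also have "\<dots> = (\<Sum>j\<in>UNIV. (if j \<in> Pos then complex_of_real ((cmod (z $ j))\<^sup>2) else 0))
        - (\<Sum>j\<in>UNIV. (if j \<in> Neg then complex_of_real ((cmod (z $ j))\<^sup>2) else 0))"
    unfolding sign by (simp add: sum_subtractf)
  also have "\<dots> = complex_of_real (herm_form Pos Neg z)"
    unfolding herm_form_def by (simp add: sum.If_cases)
  finally show ?thesis
    unfolding quadric_poly_def bilin_def by simp
qed

lemma Qform_eq_quadric_poly:
  "Pos \<inter> Neg = {} \<Longrightarrow> complex_of_real (Qform Pos Neg b z) = quadric_poly Pos Neg b z (vconj z)"
  by (simp add: quadric_poly_conj Qform_def complex_eq_iff)

lemma quadric_poly_smult:
  "quadric_poly Pos Neg b (\<tau> *s z) (\<tau> *s w) = \<tau>\<^sup>2 * quadric_poly Pos Neg b z w"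
  unfolding quadric_poly_def by (simp add: sum_distrib_left distrib_left power2_eq_square mult_ac)

lemma dderiv_snd_quadric_poly:
  "dderiv_snd (quadric_poly Pos Neg b) m z w
    = sign_coeff Pos Neg m * z $ m + (\<Sum>k\<in>UNIV. (cnj (b $ m $ k) + cnj (b $ k $ m)) * w $ k)"
proof -
  have axis: "axis m 1 $ j = (if j = m then 1 else 0 :: complex)" for j
    by (simp add: axis_def)
  have "dderiv_snd (quadric_poly Pos Neg b) m z w
      = (\<Sum>j\<in>UNIV. sign_coeff Pos Neg j * z $ j * axis m 1 $ j)
        + (\<Sum>j\<in>UNIV. \<Sum>k\<in>UNIV. cnj (b $ j $ k) * axis m 1 $ j * w $ k)
        + (\<Sum>j\<in>UNIV. \<Sum>k\<in>UNIV. cnj (b $ j $ k) * w $ j * axis m 1 $ k)"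
    unfolding quadric_poly_def[abs_def]
    by (simp add: is_bipoly_dderiv_add is_bipoly_dderiv_sum is_bipoly_dderiv_mult sum.distrib)
  also have "(\<Sum>j\<in>UNIV. sign_coeff Pos Neg j * z $ j * axis m 1 $ j) = sign_coeff Pos Neg m * z $ m"
  proof -
    have "(\<Sum>j\<in>UNIV. sign_coeff Pos Neg j * z $ j * axis m 1 $ j)
        = (\<Sum>j\<in>UNIV. if j = m then sign_coeff Pos Neg m * z $ m else 0)"
      by (rule sum.cong) (auto simp: axis)
    then show ?thesis by simp
  qed
  also have "(\<Sum>j\<in>UNIV. \<Sum>k\<in>UNIV. cnj (b $ j $ k) * axis m 1 $ j * w $ k)
      = (\<Sum>k\<in>UNIV. cnj (b $ m $ k) * w $ k)"
  proof -
    have "(\<Sum>j\<in>UNIV. \<Sum>k\<in>UNIV. cnj (b $ j $ k) * axis m 1 $ j * w $ k)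
        = (\<Sum>j\<in>UNIV. if j = m then (\<Sum>k\<in>UNIV. cnj (b $ m $ k) * w $ k) else 0)"
      by (rule sum.cong) (auto simp: axis)
    then show ?thesis by simp
  qed
  also have "(\<Sum>j\<in>UNIV. \<Sum>k\<in>UNIV. cnj (b $ j $ k) * w $ j * axis m 1 $ k)
      = (\<Sum>j\<in>UNIV. cnj (b $ j $ m) * w $ j)"
  proof (rule sum.cong[OF refl])
    fix j
    have "(\<Sum>k\<in>UNIV. cnj (b $ j $ k) * w $ j * axis m 1 $ k)
        = (\<Sum>k\<in>UNIV. if k = m then cnj (b $ j $ m) * w $ j else 0)"
      by (rule sum.cong) (auto simp: axis)
    then show "(\<Sum>k\<in>UNIV. cnj (b $ j $ k) * w $ j * axis m 1 $ k) = cnj (b $ j $ m) * w $ j"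
      by simp
  qed
  finally show ?thesis by (simp add: sum.distrib distrib_right)
qed

lemma two_distinct_elements:
  assumes "card A \<ge> 2"
  obtains p1 p2 where "p1 \<in> A" "p2 \<in> A" "p1 \<noteq> p2"
proof -
  obtain p1 B where "A = insert p1 B" "p1 \<notin> B" "1 \<le> card B"
    using assms card_le_Suc_iff[of 1 A] by (auto simp: numeral_2_eq_2)
  moreover then obtain p2 where "p2 \<in> B" by fastforce
  ultimately show ?thesis using that by blast
qed

theorem CR_polynomial_factors_through_quadric:
  fixes f :: "complex^'n::finite \<Rightarrow> complex"
  assumes "card Pos \<ge> 2" and disj: "Pos \<inter> Neg = {}"
    and "poly_zzbar f" and CR: "is_CR_on_MCR (Qform Pos Neg b) f"
  shows "\<exists>F. zs_poly F \<and> (\<forall>z. f z = F z (quadric_poly Pos Neg b z (vconj z)))"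
proof -
  let ?Q = "quadric_poly Pos Neg b"
  obtain P d where P: "bipoly P d" and f: "\<And>z. f z = P z (vconj z)"
    using poly_zzbar_bipoly[OF \<open>poly_zzbar f\<close>] by blast
  have par: "w_gradients_parallel P ?Q"
    using CR_imp_w_gradients_parallel[OF bipoly_quadric_poly Qform_eq_quadric_poly[OF disj] P f CR] .
  obtain p1 p2 where p: "p1 \<in> Pos" "p2 \<in> Pos" "p1 \<noteq> p2"
    using two_distinct_elements[OF \<open>card Pos \<ge> 2\<close>] by blast
  define L where "L p w = - (\<Sum>k\<in>UNIV. (cnj (b $ p $ k) + cnj (b $ k $ p)) * w $ k)"
    for p and w :: "complex^'n"
  have Q_pos: "dderiv_snd ?Q p z w = z $ p - L p w" if "p \<in> Pos" for p z w
    using that unfolding dderiv_snd_quadric_poly L_def by (simp add: sign_coeff_def)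
  have "bipoly (\<lambda>z w. L p w) 1" for p
    unfolding L_def by (intro bipoly_neg bipoly_sum bipoly_cmult bipoly_snd) simp
  then obtain F where "zs_poly F" "\<forall>z w. P z w = F z (?Q z w)"
    using bipoly_factors_through[OF bipoly_quadric_poly p(3) Q_pos[OF p(1)] _ Q_pos[OF p(2)] P par] by blast
  then show ?thesis using f by auto
qed

section \<open>Homogeneous polynomials\<close>

lemma homog_poly_zzbar_scale:
  assumes "homog_poly_zzbar f d"
  shows "f (of_real t *s z) = of_real t ^ d * f z"
proof -
  obtain S c where S: "finite S" "\<forall>(\<alpha>,\<beta>)\<in>S. mdeg \<alpha> + mdeg \<beta> = d"
    "\<And>z. f z = (\<Sum>(\<alpha>,\<beta>)\<in>S. c (\<alpha>,\<beta>) * mono \<alpha> z * mono \<beta> (vconj z))"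
    using assms unfolding homog_poly_zzbar_def by blast
  have "f (of_real t *s z) = (\<Sum>(\<alpha>,\<beta>)\<in>S. of_real t ^ d * (c (\<alpha>,\<beta>) * mono \<alpha> z * mono \<beta> (vconj z)))"
    unfolding S(3) vconj_smult_of_real mono_smult
  proof (rule sum.cong[OF refl], clarify)
    fix \<alpha> \<beta> assume "(\<alpha>, \<beta>) \<in> S"
    then have "d = mdeg \<alpha> + mdeg \<beta>" using S(2) by auto
    then show "c (\<alpha>, \<beta>) * (of_real t ^ mdeg \<alpha> * mono \<alpha> z) * (of_real t ^ mdeg \<beta> * mono \<beta> (vconj z))
        = of_real t ^ d * (c (\<alpha>, \<beta>) * mono \<alpha> z * mono \<beta> (vconj z))"
      by (simp add: power_add mult_ac)
  qed
  also have "\<dots> = of_real t ^ d * f z"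
    unfolding S(3) by (simp add: sum_distrib_left case_prod_unfold)
  finally show ?thesis .
qed

lemma homog_poly_zzbar_degree_unique:
  assumes "homog_poly_zzbar f d" "homog_poly_zzbar f e" "f z \<noteq> 0"
  shows "d = e"
proof -
  have "complex_of_real 2 ^ d * f z = complex_of_real 2 ^ e * f z"
    using homog_poly_zzbar_scale[OF assms(1), of 2 z] homog_poly_zzbar_scale[OF assms(2), of 2 z] by simp
  then have "complex_of_real (2 ^ d) = complex_of_real (2 ^ e)"
    using assms(3) by simp
  then have "(2::real) ^ d = 2 ^ e"
    by (simp only: of_real_eq_iff)
  then show ?thesis by simp
qed

lemma polyfun_eq_0_on_reals:
  fixes a :: "nat \<Rightarrow> complex"
  assumes "\<And>t::real. (\<Sum>i\<le>n. a i * of_real t ^ i) = 0" and "i \<le> n"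
  shows "a i = 0"
proof (rule ccontr)
  assume "a i \<noteq> 0"
  then have "finite {x. (\<Sum>i\<le>n. a i * x ^ i) = 0}"
    using polyfun_finite_roots \<open>i \<le> n\<close> by blast
  moreover have "range complex_of_real \<subseteq> {x. (\<Sum>i\<le>n. a i * x ^ i) = 0}"
    using assms(1) by auto
  ultimately have "finite (range complex_of_real)" by (rule finite_subset[rotated])
  then show False
    using finite_imageD[of complex_of_real UNIV] inj_of_real infinite_UNIV_char_0 by blast
qed

definition weighted_part ::
  "(('n::finite \<Rightarrow> nat) \<times> nat) set \<Rightarrow> (('n \<Rightarrow> nat) \<times> nat \<Rightarrow> complex) \<Rightarrow> nat \<Rightarrow> complex^'n \<Rightarrow> complex \<Rightarrow> complex"
  where "weighted_part S c e z s = (\<Sum>x\<in>{x\<in>S. mdeg (fst x) + 2 * snd x = e}. c x * mono (fst x) z * s ^ snd x)"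

lemma weighted_part_scale:
  "weighted_part S c e (\<tau> *s z) (\<tau>\<^sup>2 * s) = \<tau> ^ e * weighted_part S c e z s"
  unfolding weighted_part_def sum_distrib_left
proof (rule sum.cong[OF refl])
  fix x assume "x \<in> {x\<in>S. mdeg (fst x) + 2 * snd x = e}"
  then have e: "e = mdeg (fst x) + 2 * snd x" by simp
  show "c x * mono (fst x) (\<tau> *s z) * (\<tau>\<^sup>2 * s) ^ snd x = \<tau> ^ e * (c x * mono (fst x) z * s ^ snd x)"
    unfolding mono_smult e by (simp add: power_add power_mult_distrib mult_ac flip: power_mult)
qed

lemma poly_zs_weighted_part: "finite S \<Longrightarrow> poly_zs (weighted_part S c e)"
  unfolding poly_zs_def weighted_part_def
  by (intro exI[of _ "{x\<in>S. mdeg (fst x) + 2 * snd x = e}"] exI[of _ c]) (simp add: case_prod_unfold)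

lemma whomog_poly_zs_weighted_part: "finite S \<Longrightarrow> whomog_poly_zs (weighted_part S c e) e"
  unfolding whomog_poly_zs_def weighted_part_def
  by (intro exI[of _ "{x\<in>S. mdeg (fst x) + 2 * snd x = e}"] exI[of _ c]) (auto simp: case_prod_unfold)

lemma sum_weighted_parts:
  "finite S \<Longrightarrow> (\<Sum>x\<in>S. c x * mono (fst x) z * s ^ snd x)
     = (\<Sum>e\<in>(\<lambda>x. mdeg (fst x) + 2 * snd x) ` S. weighted_part S c e z s)"
  unfolding weighted_part_def by (rule sum.image_gen)

text \<open>Expanding \<open>f(t z) = t\<^sup>d f(z)\<close> in powers of the real parameter \<open>t\<close>, using \<open>q(t z) = t\<^sup>2 q(z)\<close>,
  and comparing coefficients isolates the weight-\<open>d\<close> part.\<close>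

lemma homog_eq_weighted_part:
  fixes q :: "complex^'n::finite \<Rightarrow> complex"
  assumes S: "finite S"
    and f: "\<And>z. f z = (\<Sum>x\<in>S. c x * mono (fst x) z * q z ^ snd x)"
    and q: "\<And>t z. q (of_real t *s z) = (of_real t)\<^sup>2 * q z"
    and homog: "homog_poly_zzbar f d"
  shows "f z = weighted_part S c d z (q z)"
proof -
  define W where "W = (\<lambda>x. mdeg (fst x) + 2 * snd x) ` S"
  define N where "N = Max (insert d W)"
  have "finite W" unfolding W_def using S by simp
  then have "d \<le> N" and W_N: "W \<subseteq> {..N}" unfolding N_def by auto
  define a where "a e = weighted_part S c e z (q z) - (if e = d then f z else 0)" for e
  have "(\<Sum>i\<le>N. a i * of_real t ^ i) = 0" for t
  proof -
    have "weighted_part S c e z s = 0" if "e \<notin> W" for e s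
      unfolding weighted_part_def using that unfolding W_def by (auto intro!: sum.neutral)
    then have "(\<Sum>i\<le>N. weighted_part S c i z (q z) * of_real t ^ i)
        = (\<Sum>i\<in>W. weighted_part S c i z (q z) * of_real t ^ i)"
      using W_N by (intro sum.mono_neutral_right) auto
    also have "\<dots> = (\<Sum>i\<in>W. weighted_part S c i (of_real t *s z) (q (of_real t *s z)))"
      unfolding q weighted_part_scale by (simp add: mult.commute)
    also have "\<dots> = f (of_real t *s z)"
      unfolding f sum_weighted_parts[OF S] W_def ..
    also have "\<dots> = of_real t ^ d * f z"
      by (rule homog_poly_zzbar_scale[OF homog])
    also have "\<dots> = (\<Sum>i\<le>N. (if i = d then f z else 0) * of_real t ^ i)"
    proof -
      have "(\<Sum>i\<le>N. (if i = d then f z else 0) * of_real t ^ i)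
          = (\<Sum>i\<le>N. if i = d then of_real t ^ d * f z else 0)"
        by (rule sum.cong) auto
      then show ?thesis using \<open>d \<le> N\<close> by simp
    qed
    finally show ?thesis
      unfolding a_def by (simp add: left_diff_distrib sum_subtractf)
  qed
  from polyfun_eq_0_on_reals[OF this \<open>d \<le> N\<close>] show ?thesis
    unfolding a_def by simp
qed

lemma homog_refinement:
  fixes q :: "complex^'n::finite \<Rightarrow> complex"
  assumes F0: "poly_zs F0" and f: "\<And>z. f z = F0 z (q z)"
    and q: "\<And>t z. q (of_real t *s z) = (of_real t)\<^sup>2 * q z"
  shows "\<exists>F. poly_zs F \<and> (\<forall>z. f z = F z (q z)) \<and> (\<forall>d. homog_poly_zzbar f d \<longrightarrow> whomog_poly_zs F d)"
proof (cases "\<exists>z1 d0. f z1 \<noteq> 0 \<and> homog_poly_zzbar f d0")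
  case True
  then obtain z1 d0 where "f z1 \<noteq> 0" and d0: "homog_poly_zzbar f d0" by blast
  obtain S c where S: "finite S" "\<And>z s. F0 z s = (\<Sum>x\<in>S. c x * mono (fst x) z * s ^ snd x)"
    using poly_zsE[OF F0] by blast
  have "f z = (\<Sum>x\<in>S. c x * mono (fst x) z * q z ^ snd x)" for z
    unfolding f S(2) ..
  then have "\<forall>z. f z = weighted_part S c d0 z (q z)"
    using homog_eq_weighted_part[OF S(1) _ q d0] by blast
  moreover have "\<forall>d. homog_poly_zzbar f d \<longrightarrow> whomog_poly_zs (weighted_part S c d0) d"
    using homog_poly_zzbar_degree_unique[OF d0 _ \<open>f z1 \<noteq> 0\<close>] whomog_poly_zs_weighted_part[OF S(1)]
    by metis
  ultimately show ?thesis
    using poly_zs_weighted_part[OF S(1)] by blast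
next
  case not_homog: False
  show ?thesis
  proof (cases "\<forall>z. f z = 0")
    case True
    have "poly_zs (\<lambda>z s. 0)" "whomog_poly_zs (\<lambda>z s. 0) d" for d
      unfolding poly_zs_def whomog_poly_zs_def by (auto intro!: exI[of _ "{}"])
    with True show ?thesis by (intro exI[of _ "\<lambda>z s. 0"]) blast
  next
    case False
    then have "\<not> homog_poly_zzbar f d" for d using not_homog by blast
    with F0 f show ?thesis by blast
  qed
qed

theorem lemma6p1:
  fixes Pos Neg :: "'n::finite set"
    and b :: "complex^'n^'n"
    and f :: "complex^'n \<Rightarrow> complex"
  assumes "CARD('n) \<ge> 2"
    and "card Pos \<ge> 2"
    and "Pos \<inter> Neg = {}"
    and "nondegenerate_qf (Qform Pos Neg b)"
    and "poly_zzbar f"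
    and "is_CR_on_MCR (Qform Pos Neg b) f"
  shows "\<exists>F. poly_zs F
           \<and> (\<forall>z. f z = F z (complex_of_real (herm_form Pos Neg z) + bilin b z + cnj (bilin b z)))
           \<and> (\<forall>d. homog_poly_zzbar f d \<longrightarrow> whomog_poly_zs F d)"
proof -
  define q where "q z = quadric_poly Pos Neg b z (vconj z)" for z
  obtain F0 where F0: "zs_poly F0" "\<And>z. f z = F0 z (q z)"
    using CR_polynomial_factors_through_quadric[OF assms(2,3,5,6)] unfolding q_def by blast
  have "q (of_real t *s z) = (of_real t)\<^sup>2 * q z" for t z
    unfolding q_def vconj_smult_of_real quadric_poly_smult ..
  from homog_refinement[OF poly_zs_if_zs_poly[OF F0(1)] F0(2) this]
  have "\<exists>F. poly_zs F \<and> (\<forall>z. f z = F z (q z))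
      \<and> (\<forall>d. homog_poly_zzbar f d \<longrightarrow> whomog_poly_zs F d)" .
  then show ?thesis
    unfolding q_def quadric_poly_conj[OF assms(3)] .
qed

end
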